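(* Let $L$ be an oriented classical or virtual link represented by a signed Gauss diagram $D$, and let $\mathcal{FQ}(L)$ be the forbidden quiver obtained from $D$. Then $\mathcal{FQ}(L)$ is invariant under Reidemeister moves; in particular, the isomorphism class of $\mathcal{FQ}(L)$ as a directed graph with signed edges is an invariant of classical and virtual links.
   Context: An oriented (classical or virtual) link with $n$ components is represented by a signed Gauss diagram: $n$ oriented circles, one per component, together with a finite set of arrows, each arrow running from the point of a circle corresponding to the over-strand of a crossing to the point corresponding to the under-strand, and decorated with the sign $\pm 1$ of the crossing (its local writhe). Virtual links are equivalence classes of Gauss diagrams under the Gauss-diagram Reidemeister moves: R1 (add or delete an arrow whose two endpoints are adjacent on one circle, i.e. intersecting no other arrow), R2 (add or delete two arrows pointing in the same direction with opposite signs, whose heads are adjacent and whose tails are adjacent), and R3 (slide the endpoints of three arrows forming a triangle past one another). Classical links are those representable by planar diagrams. The forbidden moves are $F_H$: interchange two adjacent arrowheads on a circle, and $F_T$: interchange two adjacent arrow tails on a circle. Using forbidden moves together with Reidemeister moves, any Gauss diagram can be reduced to one in which no arrow has both endpoints on the same circle and, for each ordered pair $(j,k)$ of distinct circles, all arrows from circle $j$ to circle $k$ are parallel with the same sign (pairs of opposite sign having been cancelled by R2 moves). The forbidden quiver $\mathcal{FQ}(L)$ is obtained from such a reduced diagram by shrinking each circle to a vertex: its vertices are the components of $L$, and it has one arrow from $j$ to $k$ of sign $\varepsilon$ for each arrow of sign $\varepsilon$ from circle $j$ to circle $k$ in the reduced diagram. (Equivalently, $m$ parallel arrows of sign $\varepsilon$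 from $j$ to $k$ may be recorded as a single arrow with integer label $\varepsilon m$.) *)

theory Defs
  imports Main "HOL-Library.Multiset"
begin

text \<open>A signed Gauss diagram with n components is a list of n cyclic words
(one per oriented circle, read in the direction of the orientation).
Each letter is an arrow endpoint (label, sign, is_head): the label names
the arrow, the sign is the local writhe of the crossing, and is_head
tells whether this is the head (under-crossing point) or the tail
(over-crossing point) of the arrow.\<close>

type_synonym endpt = "nat \<times> int \<times> bool"
type_synonym gdiag = "endpt list list"

definition lbl :: "endpt \<Rightarrow> nat" where "lbl e = fst e"
definition sgn_of :: "endpt \<Rightarrow> int" where "sgn_of e = fst (snd e)"
definition is_head :: "endpt \<Rightarrow> bool" where "is_head e = snd (snd e)"

definition gd_wf :: "gdiag \<Rightarrow> bool" where
  "gd_wf D \<longleftrightarrow> (\<forall>e \<in> set (concat D). \<exists>\<epsilon> \<in> {1, -1}.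
      count_list (concat D) (lbl e, \<epsilon>, True) = 1 \<and>
      count_list (concat D) (lbl e, \<epsilon>, False) = 1 \<and>
      (\<forall>e' \<in> set (concat D). lbl e' = lbl e \<longrightarrow> sgn_of e' = \<epsilon>))"

definition cyc_adj :: "endpt list \<Rightarrow> endpt \<Rightarrow> endpt \<Rightarrow> bool" where
  "cyc_adj w x y \<longleftrightarrow> (\<exists>u v. w = u @ [x, y] @ v) \<or> (\<exists>u. w = y # u @ [x])"

definition adj :: "gdiag \<Rightarrow> endpt \<Rightarrow> endpt \<Rightarrow> bool" where
  "adj D x y \<longleftrightarrow> (\<exists>w \<in> set D. cyc_adj w x y)"

definition adj2 :: "gdiag \<Rightarrow> endpt \<Rightarrow> endpt \<Rightarrow> bool" where
  "adj2 D x y \<longleftrightarrow> adj D x y \<or> adj D y x"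

definition remove_arrows :: "nat set \<Rightarrow> gdiag \<Rightarrow> gdiag" where
  "remove_arrows A D = map (filter (\<lambda>e. lbl e \<notin> A)) D"

definition swap_ep :: "endpt \<Rightarrow> endpt \<Rightarrow> endpt \<Rightarrow> endpt" where
  "swap_ep x y e = (if e = x then y else if e = y then x else e)"

definition gd_iso :: "gdiag \<Rightarrow> gdiag \<Rightarrow> bool" where
  "gd_iso D D' \<longleftrightarrow>
     (\<exists>i < length D. D' = D[i := rotate1 (D ! i)]) \<or>
     (\<exists>f. inj_on f (lbl ` set (concat D)) \<and>
          D' = map (map (\<lambda>(a, \<epsilon>, h). (f a, \<epsilon>, h))) D)"

text \<open>R1 (deletion direction): delete an arrow whose endpoints are adjacent.\<close>
definition r1_del :: "gdiag \<Rightarrow> gdiag \<Rightarrow> bool" where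
  "r1_del D D' \<longleftrightarrow> (\<exists>a \<epsilon>. adj2 D (a, \<epsilon>, True) (a, \<epsilon>, False) \<and>
                        D' = remove_arrows {a} D)"

text \<open>R2 (deletion direction): delete two arrows pointing in the same direction
with opposite signs, whose heads are adjacent and whose tails are adjacent.\<close>
definition r2_del :: "gdiag \<Rightarrow> gdiag \<Rightarrow> bool" where
  "r2_del D D' \<longleftrightarrow> (\<exists>a b \<epsilon>. a \<noteq> b \<and> \<epsilon> \<in> {1, -1} \<and>
      adj2 D (a, \<epsilon>, True) (b, -\<epsilon>, True) \<and>
      adj2 D (a, \<epsilon>, False) (b, -\<epsilon>, False) \<and>
      D' = remove_arrows {a, b} D)"

text \<open>R3: three arrows 1,2,3 forming a triangle between three strands 1,2,3;
arrow k joins the two strands other than k, and p_ki is its endpoint on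
strand i.  Admissibility (realisability by a planar Reidemeister III move):
the over/under relation is acyclic (some strand is the top strand, carrying
two tails), and, writing sigma_i = +1 iff strand i meets strand i-1 before
strand i+1 (indices mod 3), and c_ij = the sign of the crossing of strands
i,j if i is over j and minus that sign otherwise (so that c_ij is the sign of
the cross product of the directions of strands i and j), one has
c12 s1 s2 = c23 s2 s3 = c31 s3 s1 (this common value is the orientation of
the triangle).\<close>
definition r3 :: "gdiag \<Rightarrow> gdiag \<Rightarrow> bool" where
  "r3 D D' \<longleftrightarrow> (\<exists>p12 p13 p21 p23 p31 p32 s1 s2 s3 :: int.
      lbl p12 = lbl p13 \<and> lbl p21 = lbl p23 \<and> lbl p31 = lbl p32 \<and>
      distinct [lbl p12, lbl p21, lbl p31] \<and>
      is_head p12 \<noteq> is_head p13 \<and> is_head p21 \<noteq> is_head p23 \<and>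
      is_head p31 \<noteq> is_head p32 \<and>
      sgn_of p12 = sgn_of p13 \<and> sgn_of p21 = sgn_of p23 \<and> sgn_of p31 = sgn_of p32 \<and>
      s1 \<in> {1, -1} \<and> s2 \<in> {1, -1} \<and> s3 \<in> {1, -1} \<and>
      (if s1 = 1 then adj D p21 p31 else adj D p31 p21) \<and>
      (if s2 = 1 then adj D p32 p12 else adj D p12 p32) \<and>
      (if s3 = 1 then adj D p13 p23 else adj D p23 p13) \<and>
      ((\<not> is_head p21 \<and> \<not> is_head p31) \<or> (\<not> is_head p12 \<and> \<not> is_head p32) \<or>
       (\<not> is_head p13 \<and> \<not> is_head p23)) \<and>
      (let c12 = (if is_head p31 then - sgn_of p31 else sgn_of p31);
           c23 = (if is_head p12 then - sgn_of p12 else sgn_of p12);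
           c31 = (if is_head p23 then - sgn_of p23 else sgn_of p23)
       in c12 * s1 * s2 = c23 * s2 * s3 \<and> c23 * s2 * s3 = c31 * s3 * s1) \<and>
      D' = map (map (swap_ep p21 p31 \<circ> swap_ep p12 p32 \<circ> swap_ep p13 p23)) D)"

text \<open>Forbidden moves: interchange two adjacent heads / two adjacent tails.\<close>
definition fh :: "gdiag \<Rightarrow> gdiag \<Rightarrow> bool" where
  "fh D D' \<longleftrightarrow> (\<exists>x y. is_head x \<and> is_head y \<and> x \<noteq> y \<and> adj D x y \<and>
                     D' = map (map (swap_ep x y)) D)"

definition ft :: "gdiag \<Rightarrow> gdiag \<Rightarrow> bool" where
  "ft D D' \<longleftrightarrow> (\<exists>x y. \<not> is_head x \<and> \<not> is_head y \<and> x \<noteq> y \<and> adj D x y \<and>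
                     D' = map (map (swap_ep x y)) D)"

definition reid_step :: "gdiag \<Rightarrow> gdiag \<Rightarrow> bool" where
  "reid_step D D' \<longleftrightarrow> gd_wf D \<and> gd_wf D' \<and>
     (gd_iso D D' \<or> r1_del D D' \<or> r2_del D D' \<or> r3 D D')"

text \<open>Equivalence of Gauss diagrams under Reidemeister moves (virtual link equivalence).\<close>
definition reid_equiv :: "gdiag \<Rightarrow> gdiag \<Rightarrow> bool" where
  "reid_equiv = equivclp reid_step"

definition forb_step :: "gdiag \<Rightarrow> gdiag \<Rightarrow> bool" where
  "forb_step D D' \<longleftrightarrow> reid_step D D' \<or> (gd_wf D \<and> gd_wf D' \<and> (fh D D' \<or> ft D D'))"

definition forb_equiv :: "gdiag \<Rightarrow> gdiag \<Rightarrow> bool" where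
  "forb_equiv = equivclp forb_step"

definition circ_of :: "gdiag \<Rightarrow> endpt \<Rightarrow> nat" where
  "circ_of D e = (LEAST k. k < length D \<and> e \<in> set (D ! k))"

text \<open>Arrows of the quiver obtained by shrinking each circle to a vertex:
one entry (j, k, sign) for each arrow with tail on circle j and head on circle k.\<close>
definition arrow_list :: "gdiag \<Rightarrow> (nat \<times> nat \<times> int) list" where
  "arrow_list D = concat (map (\<lambda>j. map (\<lambda>e. (j, circ_of D (lbl e, sgn_of e, True), sgn_of e))
                                      (filter (\<lambda>e. \<not> is_head e) (D ! j))) [0..<length D])"

definition quiver :: "gdiag \<Rightarrow> (nat \<times> nat \<times> int) multiset" where
  "quiver D = mset (arrow_list D)"

definition reduced :: "gdiag \<Rightarrow> bool" where
  "reduced D \<longleftrightarrow> gd_wf D \<and>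
     (\<forall>(j, k, \<epsilon>) \<in> set (arrow_list D). j \<noteq> k) \<and>
     (\<forall>(j, k, \<epsilon>) \<in> set (arrow_list D). \<forall>(j', k', \<epsilon>') \<in> set (arrow_list D).
         j = j' \<and> k = k' \<longrightarrow> \<epsilon> = \<epsilon>')"

end

(* Shrinking each circle to a vertex, every arrow of a Gauss diagram becomes an edge
   (tail circle, head circle, sign).  Rotations, renamings, R3 and the forbidden moves only
   permute endpoints within a circle, so they do not change this multiset of edges at all;
   R1 deletes a loop and R2 deletes two parallel edges of opposite signs.  Hence for j \<noteq> k
   the signed number of edges from j to k (a virtual linking number) is invariant under all
   these moves.  A reduced diagram has no loops and only edges of one sign from j to k, so
   its quiver is determined by these numbers. *)

theory Submission
  imports Defs
begin

lemma distinct_concat_nth_unique: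
  assumes "distinct (concat xss)" "i < length xss" "j < length xss"
    and "x \<in> set (xss ! i)" "x \<in> set (xss ! j)"
  shows "i = j"
proof (rule ccontr)
  assume "i \<noteq> j"
  then obtain a b where ab: "a < b" "b < length xss" "x \<in> set (xss ! a)" "x \<in> set (xss ! b)"
    using assms(2-5) by (metis linorder_neqE_nat)
  have "xss ! a \<in> set (take b xss)" "xss ! b \<in> set (drop b xss)"
    using nth_mem[of a "take b xss"] nth_mem[of 0 "drop b xss"] ab(1,2) by simp_all
  then have "x \<in> set (concat (take b xss))" "x \<in> set (concat (drop b xss))"
    using ab(3,4) by auto
  moreover have "distinct (concat (take b xss) @ concat (drop b xss))"
    using assms(1) by (simp flip: concat_append)
  ultimately show False by auto
qed

lemma set_concat_conv_nth: "set (concat xss) = (\<Union>i<length xss. set (xss ! i))"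
proof -
  have "set xss = (!) xss ` {..<length xss}"
    by (metis atLeast0LessThan list.set_map map_nth set_upt)
  then show ?thesis
    by (simp add: image_image)
qed

lemma in_set_concat_conv_nth: "x \<in> set (concat xss) \<longleftrightarrow> (\<exists>i<length xss. x \<in> set (xss ! i))"
  unfolding set_concat_conv_nth by auto

lemma endpt_eta: "e = (lbl e, sgn_of e, is_head e)"
  by (simp add: lbl_def sgn_of_def is_head_def)

lemma endpt_simps [simp]: "lbl (a, \<epsilon>, h) = a" "sgn_of (a, \<epsilon>, h) = \<epsilon>" "is_head (a, \<epsilon>, h) = h"
  by (simp_all add: lbl_def sgn_of_def is_head_def)

lemma
  assumes "gd_wf D" and "e \<in> set (concat D)"
  shows gd_wf_sign: "sgn_of e \<in> {1, -1}"
    and gd_wf_count_endpoint: "count_list (concat D) (lbl e, sgn_of e, h) = 1"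
    and gd_wf_label_sign: "\<And>e'. e' \<in> set (concat D) \<Longrightarrow> lbl e' = lbl e \<Longrightarrow> sgn_of e' = sgn_of e"
proof -
  obtain \<epsilon> where "\<epsilon> \<in> {1, -1}" and counts: "count_list (concat D) (lbl e, \<epsilon>, True) = 1"
    "count_list (concat D) (lbl e, \<epsilon>, False) = 1"
    and sign: "\<forall>e' \<in> set (concat D). lbl e' = lbl e \<longrightarrow> sgn_of e' = \<epsilon>"
    using assms unfolding gd_wf_def by blast
  moreover have e: "sgn_of e = \<epsilon>"
    using sign assms(2) by blast
  ultimately show "sgn_of e \<in> {1, -1}"
    by simp
  show "count_list (concat D) (lbl e, sgn_of e, h) = 1"
    using counts unfolding e by (cases h) simp_all
  show "sgn_of e' = sgn_of e" if "e' \<in> set (concat D)" "lbl e' = lbl e" for e'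
    using sign that unfolding e by blast
qed

lemma gd_wf_endpoint:
  assumes "gd_wf D" "e \<in> set (concat D)"
  shows "(lbl e, sgn_of e, h) \<in> set (concat D)"
proof -
  have "count_list (concat D) (lbl e, sgn_of e, h) \<noteq> 0"
    using gd_wf_count_endpoint[OF assms] by simp
  then show ?thesis
    by (simp add: count_list_0_iff)
qed

lemma gd_wf_distinct:
  assumes "gd_wf D"
  shows "distinct (concat D)"
  unfolding distinct_count_atmost_1 count_mset
proof
  fix e
  show "count_list (concat D) e = (if e \<in> set (concat D) then 1 else 0)"
    using gd_wf_count_endpoint[OF assms, of e "is_head e"] by (simp flip: endpt_eta)
qed

lemma circ_of_eq:
  assumes "distinct (concat D)" "i < length D" "x \<in> set (D ! i)"
  shows "circ_of D x = i"
  unfolding circ_of_def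
proof (rule Least_equality)
  show "i < length D \<and> x \<in> set (D ! i)"
    using assms(2,3) by simp
  show "i \<le> k" if "k < length D \<and> x \<in> set (D ! k)" for k
  proof -
    from that have "k = i"
      by (intro distinct_concat_nth_unique[OF assms(1) _ assms(2) _ assms(3)]) simp_all
    then show ?thesis by simp
  qed
qed

lemma adj2_same_circle:
  assumes "adj2 D x y"
  obtains i where "i < length D" "x \<in> set (D ! i)" "y \<in> set (D ! i)"
proof -
  obtain w where "w \<in> set D" "x \<in> set w" "y \<in> set w"
    using assms unfolding adj2_def adj_def cyc_adj_def by auto
  then show ?thesis using that by (auto simp: in_set_conv_nth)
qed

definition arrow_head :: "endpt \<Rightarrow> endpt" where
  "arrow_head e = (lbl e, sgn_of e, True)"

definition tails :: "gdiag \<Rightarrow> endpt multiset" where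
  "tails D = filter_mset (\<lambda>e. \<not> is_head e) (mset (concat D))"

definition quiver_arrow :: "gdiag \<Rightarrow> endpt \<Rightarrow> nat \<times> nat \<times> int" where
  "quiver_arrow D e = (circ_of D e, circ_of D (arrow_head e), sgn_of e)"

lemma quiver_eq_image_tails:
  assumes "distinct (concat D)"
  shows "quiver D = image_mset (quiver_arrow D) (tails D)"
proof -
  have "arrow_list D =
      concat (map (\<lambda>j. map (quiver_arrow D) (filter (\<lambda>e. \<not> is_head e) (D ! j))) [0..<length D])"
    unfolding arrow_list_def
  proof (intro arg_cong[where f = concat] map_cong refl)
    fix j e
    assume "j \<in> set [0..<length D]" "e \<in> set (filter (\<lambda>e. \<not> is_head e) (D ! j))"
    then show "(j, circ_of D (lbl e, sgn_of e, True), sgn_of e) = quiver_arrow D e"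
      using circ_of_eq[OF assms, of j e] by (simp add: quiver_arrow_def arrow_head_def)
  qed
  also have "\<dots> = map (quiver_arrow D) (filter (\<lambda>e. \<not> is_head e) (concat (map ((!) D) [0..<length D])))"
    by (simp add: filter_concat map_concat o_def)
  also have "map ((!) D) [0..<length D] = D"
    by (rule map_nth)
  finally show ?thesis
    unfolding quiver_def tails_def by simp
qed

lemma quiver_eq_if_same_circles:
  assumes "distinct (concat D)" "distinct (concat D')" "length D' = length D"
    and "\<And>i. i < length D \<Longrightarrow> set (D' ! i) = set (D ! i)"
  shows "quiver D' = quiver D"
proof -
  have "(k < length D' \<and> e \<in> set (D' ! k)) \<longleftrightarrow> (k < length D \<and> e \<in> set (D ! k))" for k e
    using assms(3,4) by auto
  then have "circ_of D' = circ_of D"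
    unfolding circ_of_def[abs_def] by simp
  moreover have "set (concat D') = set (concat D)"
    unfolding set_concat_conv_nth using assms(3,4) by simp
  then have "mset (concat D') = mset (concat D)"
    using assms(1,2) by (metis mset_set_set)
  ultimately show ?thesis
    using assms(1,2) by (simp add: quiver_eq_image_tails tails_def quiver_arrow_def[abs_def])
qed

lemma swap_ep_image: "(x \<in> A \<longleftrightarrow> y \<in> A) \<Longrightarrow> swap_ep x y ` A = A"
  unfolding swap_ep_def by (auto simp: image_iff)

lemma swap_ep_image_circle:
  assumes "distinct (concat D)" "adj2 D x y" "i < length D"
  shows "swap_ep x y ` set (D ! i) = set (D ! i)"
proof (rule swap_ep_image)
  obtain k where "k < length D" "x \<in> set (D ! k)" "y \<in> set (D ! k)"
    using assms(2) by (rule adj2_same_circle)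
  then show "x \<in> set (D ! i) \<longleftrightarrow> y \<in> set (D ! i)"
    using distinct_concat_nth_unique[OF assms(1) _ assms(3)] by blast
qed

lemma quiver_map_permuting_circles:
  assumes "distinct (concat D)" "distinct (concat (map (map g) D))"
    and "\<And>i. i < length D \<Longrightarrow> g ` set (D ! i) = set (D ! i)"
  shows "quiver (map (map g) D) = quiver D"
  using assms by (intro quiver_eq_if_same_circles) simp_all

lemma quiver_swap_adjacent:
  assumes "distinct (concat D)" "distinct (concat (map (map (swap_ep x y)) D))" "adj2 D x y"
  shows "quiver (map (map (swap_ep x y)) D) = quiver D"
  using assms swap_ep_image_circle by (intro quiver_map_permuting_circles)

lemma quiver_r3:
  assumes "distinct (concat D)" "distinct (concat D')" "r3 D D'"
  shows "quiver D' = quiver D"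
proof -
  obtain p12 p13 p21 p23 p31 p32 and s1 s2 s3 :: int where
    "if s1 = 1 then adj D p21 p31 else adj D p31 p21"
    "if s2 = 1 then adj D p32 p12 else adj D p12 p32"
    "if s3 = 1 then adj D p13 p23 else adj D p23 p13" and
    D': "D' = map (map (swap_ep p21 p31 \<circ> swap_ep p12 p32 \<circ> swap_ep p13 p23)) D"
    using assms(3) unfolding r3_def by blast
  then have "adj2 D p21 p31" "adj2 D p12 p32" "adj2 D p13 p23"
    unfolding adj2_def by (auto split: if_splits)
  then have "swap_ep p21 p31 ` swap_ep p12 p32 ` swap_ep p13 p23 ` set (D ! i) = set (D ! i)"
    if "i < length D" for i
    using swap_ep_image_circle[OF assms(1) _ that] by simp
  then have "(swap_ep p21 p31 \<circ> swap_ep p12 p32 \<circ> swap_ep p13 p23) ` set (D ! i) = set (D ! i)"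
    if "i < length D" for i
    using that by (simp add: image_comp)
  then show ?thesis
    using assms(1,2) unfolding D' by (intro quiver_map_permuting_circles)
qed

lemma quiver_rotate1:
  assumes "distinct (concat D)" "distinct (concat (D[i := rotate1 (D ! i)]))" "i < length D"
  shows "quiver (D[i := rotate1 (D ! i)]) = quiver D"
  using assms by (intro quiver_eq_if_same_circles) (auto simp: nth_list_update)

lemma arrow_head_mem:
  assumes "gd_wf D" "e \<in> set (concat D)"
  shows "arrow_head e \<in> set (concat D)"
  unfolding arrow_head_def using assms by (rule gd_wf_endpoint)

lemma in_tailsD: "e \<in># tails D \<Longrightarrow> e \<in> set (concat D)"
  by (simp add: tails_def)

lemma quiver_rename_arrows:
  assumes "gd_wf D" "distinct (concat D')"
    and D': "D' = map (map (\<lambda>(a, \<epsilon>, h). (f a, \<epsilon>, h))) D"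
  shows "quiver D' = quiver D"
proof -
  define r :: "endpt \<Rightarrow> endpt" where "r e = (f (lbl e), sgn_of e, is_head e)" for e
  have r_simps: "lbl (r e) = f (lbl e)" "sgn_of (r e) = sgn_of e" "is_head (r e) = is_head e"
    "arrow_head (r e) = r (arrow_head e)" for e
    by (simp_all add: r_def arrow_head_def)
  have "(\<lambda>(a, \<epsilon>, h). (f a, \<epsilon>, h)) = r"
    by (rule ext) (simp add: r_def split: prod.split)
  then have D'_r: "D' = map (map r) D"
    using D' by simp
  have dist: "distinct (concat D)"
    using assms(1) by (rule gd_wf_distinct)
  have circ: "circ_of D' (r x) = circ_of D x" if x: "x \<in> set (concat D)" for x
  proof -
    obtain i where i: "i < length D" "x \<in> set (D ! i)"
      using x unfolding in_set_concat_conv_nth by blast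
    then have "i < length D'" "r x \<in> set (D' ! i)"
      unfolding D'_r by simp_all
    then have "circ_of D' (r x) = i"
      by (rule circ_of_eq[OF assms(2)])
    also have "i = circ_of D x"
      using circ_of_eq[OF dist i] by (rule sym)
    finally show ?thesis .
  qed
  have arrow: "quiver_arrow D' (r e) = quiver_arrow D e" if "e \<in> set (concat D)" for e
    using circ[OF that] circ[OF arrow_head_mem[OF assms(1) that]]
    by (simp add: quiver_arrow_def r_simps)
  have "mset (concat D') = image_mset r (mset (concat D))"
    unfolding D'_r by (simp flip: map_concat)
  then have "tails D' = image_mset r (tails D)"
    by (simp add: tails_def filter_mset_image_mset r_simps)
  then have "quiver D' = image_mset (quiver_arrow D' \<circ> r) (tails D)"
    by (simp add: quiver_eq_image_tails[OF assms(2)] multiset.map_comp)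
  also have "\<dots> = quiver D"
    unfolding quiver_eq_image_tails[OF dist] using arrow in_tailsD
    by (intro image_mset_cong) simp
  finally show ?thesis .
qed

lemma circ_of_remove_arrows:
  assumes "lbl x \<notin> A"
  shows "circ_of (remove_arrows A D) x = circ_of D x"
proof -
  have "(k < length (remove_arrows A D) \<and> x \<in> set (remove_arrows A D ! k)) \<longleftrightarrow>
      (k < length D \<and> x \<in> set (D ! k))" for k
    using assms by (auto simp: remove_arrows_def)
  then show ?thesis
    unfolding circ_of_def by simp
qed

lemma concat_remove_arrows:
  "concat (remove_arrows A D) = filter (\<lambda>e. lbl e \<notin> A) (concat D)"
  by (simp add: remove_arrows_def filter_concat)

lemma tails_remove_arrows: "tails (remove_arrows A D) = filter_mset (\<lambda>e. lbl e \<notin> A) (tails D)"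
  by (simp add: tails_def concat_remove_arrows filter_filter_mset conj_commute)

lemma quiver_remove_arrows:
  assumes "distinct (concat D)"
  shows "quiver D =
    quiver (remove_arrows A D) + image_mset (quiver_arrow D) (filter_mset (\<lambda>e. lbl e \<in> A) (tails D))"
proof -
  have "distinct (concat (remove_arrows A D))"
    using assms by (simp add: concat_remove_arrows)
  then have "quiver (remove_arrows A D) =
      image_mset (quiver_arrow (remove_arrows A D)) (filter_mset (\<lambda>e. lbl e \<notin> A) (tails D))"
    by (simp add: quiver_eq_image_tails tails_remove_arrows)
  also have "\<dots> = image_mset (quiver_arrow D) (filter_mset (\<lambda>e. lbl e \<notin> A) (tails D))"
    by (rule image_mset_cong) (simp add: quiver_arrow_def arrow_head_def circ_of_remove_arrows)
  finally show ?thesis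
    using multiset_partition[of "tails D" "\<lambda>e. lbl e \<notin> A"]
    by (simp add: quiver_eq_image_tails[OF assms] flip: image_mset_union)
qed

lemma tails_with_label:
  assumes "gd_wf D" "(a, \<epsilon>, h) \<in> set (concat D)"
  shows "filter_mset (\<lambda>e. lbl e = a) (tails D) = {#(a, \<epsilon>, False)#}"
proof -
  let ?tails_a = "filter (\<lambda>e. \<not> is_head e \<and> lbl e = a) (concat D)"
  have set_tails_a: "set ?tails_a = {(a, \<epsilon>, False)}"
  proof (intro equalityI subsetI)
    fix e assume "e \<in> set ?tails_a"
    then show "e \<in> {(a, \<epsilon>, False)}"
      using gd_wf_label_sign[OF assms, of e] endpt_eta[of e] by auto
  next
    fix e assume "e \<in> {(a, \<epsilon>, False)}"
    then show "e \<in> set ?tails_a"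
      using gd_wf_endpoint[OF assms, of False] by simp
  qed
  have "filter_mset (\<lambda>e. lbl e = a) (tails D) = mset ?tails_a"
    by (simp add: tails_def filter_filter_mset)
  also have "\<dots> = mset_set (set ?tails_a)"
    using gd_wf_distinct[OF assms(1)] by (intro mset_set_set[symmetric] distinct_filter)
  also have "\<dots> = {#(a, \<epsilon>, False)#}"
    unfolding set_tails_a by simp
  finally show ?thesis .
qed

lemma quiver_r1_del:
  assumes "gd_wf D" "r1_del D D'"
  obtains i \<epsilon> where "quiver D = add_mset (i, i, \<epsilon>) (quiver D')"
proof -
  obtain a \<epsilon> where adj: "adj2 D (a, \<epsilon>, True) (a, \<epsilon>, False)" and D': "D' = remove_arrows {a} D"
    using assms(2) unfolding r1_del_def by blast
  from adj obtain i where i: "i < length D" "(a, \<epsilon>, True) \<in> set (D ! i)" "(a, \<epsilon>, False) \<in> set (D ! i)"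
    by (rule adj2_same_circle)
  have dist: "distinct (concat D)"
    using assms(1) by (rule gd_wf_distinct)
  have "(a, \<epsilon>, True) \<in> set (concat D)"
    using i(1,2) unfolding in_set_concat_conv_nth by blast
  from tails_with_label[OF assms(1) this]
  have "filter_mset (\<lambda>e. lbl e \<in> {a}) (tails D) = {#(a, \<epsilon>, False)#}"
    by simp
  moreover have "quiver_arrow D (a, \<epsilon>, False) = (i, i, \<epsilon>)"
    using circ_of_eq[OF dist i(1,3)] circ_of_eq[OF dist i(1,2)]
    by (simp add: quiver_arrow_def arrow_head_def)
  ultimately have "quiver D = add_mset (i, i, \<epsilon>) (quiver D')"
    using quiver_remove_arrows[OF dist, of "{a}"] unfolding D' by simp
  then show ?thesis by (rule that)
qed

lemma quiver_r2_del:
  assumes "gd_wf D" "r2_del D D'"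
  obtains i k \<epsilon> where "quiver D = quiver D' + {#(i, k, \<epsilon>), (i, k, -\<epsilon>)#}"
proof -
  obtain a b \<epsilon> where "a \<noteq> b" and heads_adj: "adj2 D (a, \<epsilon>, True) (b, -\<epsilon>, True)"
    and tails_adj: "adj2 D (a, \<epsilon>, False) (b, -\<epsilon>, False)" and D': "D' = remove_arrows {a, b} D"
    using assms(2) unfolding r2_del_def by blast
  obtain k where k: "k < length D" "(a, \<epsilon>, True) \<in> set (D ! k)" "(b, -\<epsilon>, True) \<in> set (D ! k)"
    using heads_adj by (rule adj2_same_circle)
  obtain i where i: "i < length D" "(a, \<epsilon>, False) \<in> set (D ! i)" "(b, -\<epsilon>, False) \<in> set (D ! i)"
    using tails_adj by (rule adj2_same_circle)
  have dist: "distinct (concat D)"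
    using assms(1) by (rule gd_wf_distinct)
  have "filter_mset (\<lambda>e. lbl e \<in> {a, b}) M = filter_mset (\<lambda>e. lbl e = a) M + filter_mset (\<lambda>e. lbl e = b) M"
    for M :: "endpt multiset"
    using \<open>a \<noteq> b\<close> by (induction M) auto
  moreover have "(a, \<epsilon>, False) \<in> set (concat D)" "(b, -\<epsilon>, False) \<in> set (concat D)"
    using i unfolding in_set_concat_conv_nth by blast+
  ultimately have "filter_mset (\<lambda>e. lbl e \<in> {a, b}) (tails D) = {#(a, \<epsilon>, False), (b, -\<epsilon>, False)#}"
    using tails_with_label[OF assms(1) \<open>(a, \<epsilon>, False) \<in> set (concat D)\<close>]
      tails_with_label[OF assms(1) \<open>(b, -\<epsilon>, False) \<in> set (concat D)\<close>] by simp
  moreover have "quiver_arrow D (a, \<epsilon>, False) = (i, k, \<epsilon>)" "quiver_arrow D (b, -\<epsilon>, False) = (i, k, -\<epsilon>)"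
    using circ_of_eq[OF dist i(1,2)] circ_of_eq[OF dist i(1,3)]
      circ_of_eq[OF dist k(1,2)] circ_of_eq[OF dist k(1,3)]
    by (simp_all add: quiver_arrow_def arrow_head_def)
  ultimately have "quiver D = quiver D' + {#(i, k, \<epsilon>), (i, k, -\<epsilon>)#}"
    using quiver_remove_arrows[OF dist, of "{a, b}"] unfolding D' by simp
  then show ?thesis by (rule that)
qed

lemma quiver_gd_iso:
  assumes "gd_wf D" "distinct (concat D')" "gd_iso D D'"
  shows "quiver D' = quiver D"
proof -
  have dist: "distinct (concat D)"
    using assms(1) by (rule gd_wf_distinct)
  consider (rotate) i where "i < length D" "D' = D[i := rotate1 (D ! i)]"
    | (rename) f where "D' = map (map (\<lambda>(a, \<epsilon>, h). (f a, \<epsilon>, h))) D"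
    using assms(3) unfolding gd_iso_def by blast
  then show ?thesis
  proof cases
    case rotate
    then show ?thesis using quiver_rotate1[OF dist, of i] assms(2) by simp
  next
    case rename
    then show ?thesis by (rule quiver_rename_arrows[OF assms(1,2)])
  qed
qed

lemma quiver_forbidden_move:
  assumes "distinct (concat D)" "distinct (concat D')" "fh D D' \<or> ft D D'"
  shows "quiver D' = quiver D"
proof -
  obtain x y where "adj2 D x y" and D': "D' = map (map (swap_ep x y)) D"
    using assms(3) unfolding fh_def ft_def adj2_def by blast
  then show ?thesis
    using quiver_swap_adjacent assms(1,2) by simp
qed

definition linking_number :: "(nat \<times> nat \<times> int) multiset \<Rightarrow> nat \<Rightarrow> nat \<Rightarrow> int" where
  "linking_number Q j k = (\<Sum>(j', k', \<epsilon>)\<in>#Q. if (j', k') = (j, k) then \<epsilon> else 0)"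

lemma linking_number_simps [simp]:
  "linking_number {#} j k = 0"
  "linking_number (add_mset (j', k', \<epsilon>) Q) j k = (if (j', k') = (j, k) then \<epsilon> else 0) + linking_number Q j k"
  "linking_number (Q + Q') j k = linking_number Q j k + linking_number Q' j k"
  by (simp_all add: linking_number_def)

lemma linking_number_reid_step:
  assumes "reid_step D D'" "j \<noteq> k"
  shows "linking_number (quiver D') j k = linking_number (quiver D) j k"
proof -
  have wf: "gd_wf D" "gd_wf D'" and dist: "distinct (concat D)" "distinct (concat D')"
    using assms(1) gd_wf_distinct by (auto simp: reid_step_def)
  consider "gd_iso D D'" | "r1_del D D'" | "r2_del D D'" | "r3 D D'"
    using assms(1) unfolding reid_step_def by blast
  then show ?thesis
  proof cases
    case 1
    then show ?thesis using quiver_gd_iso[OF wf(1) dist(2)] by simp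
  next
    case 2
    then obtain i \<epsilon> where "quiver D = add_mset (i, i, \<epsilon>) (quiver D')"
      using wf(1) quiver_r1_del by blast
    then show ?thesis using assms(2) by simp
  next
    case 3
    then obtain i k' \<epsilon> where "quiver D = quiver D' + {#(i, k', \<epsilon>), (i, k', -\<epsilon>)#}"
      using wf(1) quiver_r2_del by blast
    then show ?thesis by simp
  next
    case 4
    then show ?thesis using quiver_r3[OF dist] by simp
  qed
qed

lemma linking_number_forb_step:
  assumes "forb_step D D'" "j \<noteq> k"
  shows "linking_number (quiver D') j k = linking_number (quiver D) j k"
  using assms(1) unfolding forb_step_def
proof
  assume "reid_step D D'"
  then show ?thesis using assms(2) by (rule linking_number_reid_step)
next
  assume "gd_wf D \<and> gd_wf D' \<and> (fh D D' \<or> ft D D')"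
  then have "quiver D' = quiver D"
    using quiver_forbidden_move[OF gd_wf_distinct gd_wf_distinct] by blast
  then show ?thesis by simp
qed

lemma linking_number_forb_equiv:
  assumes "forb_equiv D D'" "j \<noteq> k"
  shows "linking_number (quiver D') j k = linking_number (quiver D) j k"
  using assms(1) unfolding forb_equiv_def
proof (induction rule: equivclp_induct)
  case (step E F)
  then show ?case
    using linking_number_forb_step[OF _ assms(2), of E F] linking_number_forb_step[OF _ assms(2), of F E]
    by auto
qed simp

lemma forb_equiv_if_reid_equiv:
  assumes "reid_equiv D D'"
  shows "forb_equiv D D'"
  using assms unfolding reid_equiv_def forb_equiv_def
proof (induction rule: equivclp_induct)
  case (step E F)
  then show ?case by (meson equivclp_into_equivclp forb_step_def)
qed simp

definition reduced_quiver :: "(nat \<times> nat \<times> int) multiset \<Rightarrow> bool" where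
  "reduced_quiver Q \<longleftrightarrow> (\<forall>(j, k, \<epsilon>)\<in>#Q. j \<noteq> k \<and> \<epsilon> \<in> {1, -1}) \<and>
     (\<forall>(j, k, \<epsilon>)\<in>#Q. \<forall>(j', k', \<epsilon>')\<in>#Q. (j, k) = (j', k') \<longrightarrow> \<epsilon> = \<epsilon>')"

lemma reduced_quiver_quiver:
  assumes "reduced R"
  shows "reduced_quiver (quiver R)"
proof -
  have wf: "gd_wf R"
    using assms by (simp add: reduced_def)
  have "\<epsilon> \<in> {1, -1}" if "(j, k, \<epsilon>) \<in># quiver R" for j k \<epsilon>
    using that gd_wf_sign[OF wf]
    by (auto simp: quiver_eq_image_tails[OF gd_wf_distinct[OF wf]] tails_def quiver_arrow_def)
  then show ?thesis
    using assms unfolding reduced_def reduced_quiver_def by (auto simp: quiver_def)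
qed

lemma linking_number_eq_count_diff:
  assumes "\<forall>(j', k', \<epsilon>)\<in>#Q. \<epsilon> \<in> {1, -1}"
  shows "linking_number Q j k = int (count Q (j, k, 1)) - int (count Q (j, k, -1))"
  using assms
proof (induction Q)
  case (add x Q)
  obtain j' k' \<epsilon> where x: "x = (j', k', \<epsilon>)"
    by (cases x)
  have "\<epsilon> = 1 \<or> \<epsilon> = -1"
    using add.prems x by simp
  then show ?case
    using add x by (cases "(j', k') = (j, k)") auto
qed simp

lemma count_reduced_quiver:
  assumes "reduced_quiver Q"
  shows "count Q (j, k, \<epsilon>) = (if j \<noteq> k \<and> \<epsilon> \<in> {1, -1} then nat (\<epsilon> * linking_number Q j k) else 0)"
proof (cases "j \<noteq> k \<and> \<epsilon> \<in> {1, -1}")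
  case True
  have "(j, k, 1) \<notin># Q \<or> (j, k, -1) \<notin># Q"
    using assms unfolding reduced_quiver_def by fastforce
  moreover have "linking_number Q j k = int (count Q (j, k, 1)) - int (count Q (j, k, -1))"
    using assms unfolding reduced_quiver_def by (intro linking_number_eq_count_diff) auto
  ultimately show ?thesis
    using True by (auto simp: not_in_iff)
next
  case False
  then have "(j, k, \<epsilon>) \<notin># Q"
    using assms unfolding reduced_quiver_def by auto
  then show ?thesis
    using False by (auto simp: not_in_iff)
qed

lemma reduced_quiver_eqI:
  assumes "reduced_quiver Q" "reduced_quiver Q'"
    and "\<And>j k. j \<noteq> k \<Longrightarrow> linking_number Q j k = linking_number Q' j k"
  shows "Q = Q'"
proof (rule multiset_eqI)
  fix x :: "nat \<times> nat \<times> int"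
  show "count Q x = count Q' x"
    using assms by (cases x) (simp add: count_reduced_quiver)
qed

theorem mainTheorem1:
  fixes D1 D2 R1 R2 :: gdiag
  assumes "gd_wf D1" and "gd_wf D2"
    and "reid_equiv D1 D2"
    and "forb_equiv D1 R1" and "reduced R1"
    and "forb_equiv D2 R2" and "reduced R2"
  shows "quiver R1 = quiver R2"
proof -
  have "forb_equiv D1 D2"
    using assms(3) by (rule forb_equiv_if_reid_equiv)
  then have "forb_equiv R2 R1"
    using assms(4,6) unfolding forb_equiv_def by (meson equivclp_sym equivclp_trans)
  then show ?thesis
    by (intro reduced_quiver_eqI reduced_quiver_quiver assms(5,7) linking_number_forb_equiv)
qed

end
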